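(* Let $N_1,N_3,J,L\in\mathbb{N}$ and let $\hat{\mathcal{X}}\in\mathbb{R}^{N_1\times J\times N_3\times L}$ be a real fourth-order tensor with slices $\hat{\mathcal{X}}_{jl}\in\mathbb{R}^{N_1\times N_3}$ given by $(\hat{\mathcal{X}}_{jl})_{ik}=\hat{\mathcal{X}}_{ijkl}$. Consider all factorizations $\hat{\mathcal{X}}_{jl}=\mathbf{U}(\mathbf{R}_j\mathbf{T}_l)\mathbf{V}^\top$ for all $j=1,\dots,J$, $l=1,\dots,L$, where $D\in\mathbb{N}$ is arbitrary, $\mathbf{U}\in\mathbb{R}^{N_1\times D}$, $\mathbf{V}\in\mathbb{R}^{N_3\times D}$, and $\mathbf{R}_j,\mathbf{T}_l\in\mathbb{R}^{D\times D}$ are real diagonal matrices. Then $$\|\hat{\mathcal{X}}\|_*=\min_{\substack{D,\ \mathbf{U},\mathbf{V},(\mathbf{R}_j),(\mathbf{T}_l):\\ \hat{\mathcal{X}}_{jl}=\mathbf{U}(\mathbf{R}_j\mathbf{T}_l)\mathbf{V}^\top\ \forall j,l}}\ \frac{1}{4\sqrt{JL}}\sum_{l=1}^{L}\sum_{j=1}^{J}\Big(\|\mathbf{U}\mathbf{R}_j\|_F^2+\|\mathbf{V}\mathbf{T}_l^\top\|_F^2+\|\mathbf{U}\mathbf{T}_l\|_F^2+\|\mathbf{V}\mathbf{R}_j^\top\|_F^2\Big).$$ Moreover, every factorization attaining this minimum satisfies, for every $d\in\{1,\dots,D\}$, $$\sqrt{L}\,\|\mathbf{u}_{:d}\|_2\|\mathbf{r}_{:d}\|_2=\sqrt{J}\,\|\mathbf{v}_{:d}\|_2\|\mathbf{t}_{:d}\|_2\quad\text{and}\quad\sqrt{J}\,\|\mathbf{u}_{:d}\|_2\|\mathbf{t}_{:d}\|_2=\sqrt{L}\,\|\mathbf{v}_{:d}\|_2\|\mathbf{r}_{:d}\|_2,$$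 where $\mathbf{u}_{:d},\mathbf{v}_{:d}$ are the $d$-th columns of $\mathbf{U},\mathbf{V}$, $\mathbf{r}_{:d}\in\mathbb{R}^J$ is the $d$-th column of $\widetilde{\mathbf{R}}\in\mathbb{R}^{J\times D}$ with $\widetilde{\mathbf{R}}(j,d)=\mathbf{R}_j(d,d)$, and $\mathbf{t}_{:d}\in\mathbb{R}^L$ is the $d$-th column of $\widetilde{\mathbf{T}}\in\mathbb{R}^{L\times D}$ with $\widetilde{\mathbf{T}}(l,d)=\mathbf{T}_l(d,d)$.
   Context: $\|\cdot\|_F$ is the Frobenius norm and $\|\cdot\|_2$ the Euclidean norm. The tensor nuclear 2-norm of a real tensor $\mathcal{A}\in\mathbb{R}^{n_1}\otimes\mathbb{R}^{n_2}\otimes\mathbb{R}^{n_3}\otimes\mathbb{R}^{n_4}$ is $\|\mathcal{A}\|_*=\min\big\{\sum_{i=1}^r\prod_{k=1}^4\|\mathbf{a}_{k,i}\|_2:\ \mathcal{A}=\sum_{i=1}^r\mathbf{a}_{1,i}\otimes\mathbf{a}_{2,i}\otimes\mathbf{a}_{3,i}\otimes\mathbf{a}_{4,i},\ r\in\mathbb{N},\ \mathbf{a}_{k,i}\in\mathbb{R}^{n_k}\big\}$, where $\otimes$ is the outer product. The factorization condition is equivalent to $\hat{\mathcal{X}}=\sum_{d=1}^D\mathbf{u}_{:d}\otimes\mathbf{r}_{:d}\otimes\mathbf{v}_{:d}\otimes\mathbf{t}_{:d}$. *)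

theory Defs
  imports Complex_Main
begin

text \<open>Vectors in R^n are represented as functions nat => real, with only the
entries at indices 0..n-1 relevant.  Fourth-order tensors in
R^{N1 x N2 x N3 x N4} are functions nat => nat => nat => nat => real with
only indices below the bounds relevant.\<close>

definition vnorm2 :: "nat \<Rightarrow> (nat \<Rightarrow> real) \<Rightarrow> real" where
  "vnorm2 n a = sqrt (\<Sum>i<n. (a i)\<^sup>2)"

definition nuclear_norm4 ::
  "nat \<Rightarrow> nat \<Rightarrow> nat \<Rightarrow> nat \<Rightarrow> (nat \<Rightarrow> nat \<Rightarrow> nat \<Rightarrow> nat \<Rightarrow> real) \<Rightarrow> real" where
  "nuclear_norm4 n1 n2 n3 n4 X = Inf
     {s. \<exists>(r::nat) (a1::(nat\<Rightarrow>nat\<Rightarrow>real)) (a2::(nat\<Rightarrow>nat\<Rightarrow>real)) (a3::(nat\<Rightarrow>nat\<Rightarrow>real)) (a4::(nat\<Rightarrow>nat\<Rightarrow>real)).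
        s = (\<Sum>i<r. vnorm2 n1 (a1 i) * vnorm2 n2 (a2 i) * vnorm2 n3 (a3 i) * vnorm2 n4 (a4 i)) \<and>
        (\<forall>p<n1. \<forall>q<n2. \<forall>s<n3. \<forall>t<n4.
           X p q s t = (\<Sum>i<r. a1 i p * a2 i q * a3 i s * a4 i t))}"

text \<open>Factorization data: U is N1 x D, V is N3 x D; the diagonal matrices
R_j, T_l are represented through Rt (J x D) with Rt j d = R_j(d,d) and
Tt (L x D) with Tt l d = T_l(d,d).\<close>
definition is_factorization ::
  "nat \<Rightarrow> nat \<Rightarrow> nat \<Rightarrow> nat \<Rightarrow> (nat \<Rightarrow> nat \<Rightarrow> nat \<Rightarrow> nat \<Rightarrow> real) \<Rightarrow>
   nat \<Rightarrow> (nat \<Rightarrow> nat \<Rightarrow> real) \<Rightarrow> (nat \<Rightarrow> nat \<Rightarrow> real) \<Rightarrow>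
   (nat \<Rightarrow> nat \<Rightarrow> real) \<Rightarrow> (nat \<Rightarrow> nat \<Rightarrow> real) \<Rightarrow> bool" where
  "is_factorization N1 J N3 L X D U V Rt Tt \<longleftrightarrow>
     (\<forall>i<N1. \<forall>j<J. \<forall>k<N3. \<forall>l<L.
        X i j k l = (\<Sum>d<D. U i d * (Rt j d * Tt l d) * V k d))"

definition fact_objective ::
  "nat \<Rightarrow> nat \<Rightarrow> nat \<Rightarrow> nat \<Rightarrow> nat \<Rightarrow> (nat \<Rightarrow> nat \<Rightarrow> real) \<Rightarrow> (nat \<Rightarrow> nat \<Rightarrow> real) \<Rightarrow>
   (nat \<Rightarrow> nat \<Rightarrow> real) \<Rightarrow> (nat \<Rightarrow> nat \<Rightarrow> real) \<Rightarrow> real" where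
  "fact_objective N1 J N3 L D U V Rt Tt =
     1 / (4 * sqrt (real J * real L)) *
     (\<Sum>l<L. \<Sum>j<J.
        (\<Sum>i<N1. \<Sum>d<D. (U i d * Rt j d)\<^sup>2)
      + (\<Sum>k<N3. \<Sum>d<D. (V k d * Tt l d)\<^sup>2)
      + (\<Sum>i<N1. \<Sum>d<D. (U i d * Tt l d)\<^sup>2)
      + (\<Sum>k<N3. \<Sum>d<D. (V k d * Rt j d)\<^sup>2))"

end

theory Submission
  imports Defs "HOL-Analysis.Analysis"
begin

(* Each factorization X_jl = U (R_j T_l) V^T is a rank-one decomposition of X with columns
   u_d (x) r_d (x) v_d (x) t_d.  Summing the objective over j and l turns it into
   sum_d (L |u|^2 |r|^2 + J |v|^2 |t|^2 + J |u|^2 |t|^2 + L |v|^2 |r|^2) / (4 sqrt(JL)), and by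
   completing squares this equals sum_d |u| |r| |v| |t| plus a nonnegative imbalance term which
   vanishes exactly under the stated balance conditions.  Hence the objective dominates the
   nuclear norm, with equality only for balanced factorizations.  Conversely the nuclear norm is
   attained: by a Caratheodory argument at most N1 J N3 L rank-one terms are needed, rescaling
   the factors of each term to equal norms bounds all entries, and compactness gives an optimal
   decomposition, whose factors can then be rescaled into a balanced factorization. *)

lemma vnorm2_nonneg: "0 \<le> vnorm2 n a"
  by (simp add: vnorm2_def sum_nonneg)

lemma power2_vnorm2: "(vnorm2 n a)\<^sup>2 = (\<Sum>p<n. (a p)\<^sup>2)"
  by (simp add: vnorm2_def sum_nonneg)

lemma vnorm2_cong: "(\<And>p. p < n \<Longrightarrow> a p = b p) \<Longrightarrow> vnorm2 n a = vnorm2 n b"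
  by (simp add: vnorm2_def)

lemma vnorm2_cmult: "vnorm2 n (\<lambda>p. c * a p) = \<bar>c\<bar> * vnorm2 n a"
proof -
  have "(\<Sum>p<n. (c * a p)\<^sup>2) = c\<^sup>2 * (\<Sum>p<n. (a p)\<^sup>2)"
    by (simp add: power_mult_distrib sum_distrib_left)
  then show ?thesis
    by (simp add: vnorm2_def real_sqrt_mult)
qed

lemma vnorm2_eq_0_iff: "vnorm2 n a = 0 \<longleftrightarrow> (\<forall>p<n. a p = 0)"
  by (auto simp: vnorm2_def sum_nonneg_eq_0_iff)

lemma abs_le_vnorm2: "p < n \<Longrightarrow> \<bar>a p\<bar> \<le> vnorm2 n a"
proof -
  assume "p < n"
  then have "(a p)\<^sup>2 \<le> (\<Sum>p<n. (a p)\<^sup>2)"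
    by (intro member_le_sum) auto
  then show ?thesis
    unfolding vnorm2_def by (metis real_sqrt_abs real_sqrt_le_iff)
qed

lemma nontrivial_relation_if_card_less:
  fixes v :: "'i \<Rightarrow> 'x \<Rightarrow> real"
  assumes "finite I" "finite K" "card I < card K"
  shows "\<exists>\<mu>. (\<exists>i\<in>K. \<mu> i \<noteq> 0) \<and> (\<forall>x\<in>I. (\<Sum>i\<in>K. \<mu> i * v i x) = 0)"
  using assms
proof (induction I arbitrary: K v rule: finite_induct)
  case empty
  then show ?case
    by (intro exI[of _ "\<lambda>_. 1"]) (auto simp: card_gt_0_iff)
next
  case (insert x0 I)
  show ?case
  proof (cases "\<forall>i\<in>K. v i x0 = 0")
    case True
    have "card I < card K"
      using insert by simp
    then obtain \<mu> where "\<exists>i\<in>K. \<mu> i \<noteq> 0" "\<forall>x\<in>I. (\<Sum>i\<in>K. \<mu> i * v i x) = 0"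
      using insert.IH[OF insert.prems(1)] by blast
    with True show ?thesis
      by (intro exI[of _ \<mu>]) auto
  next
    case False
    then obtain k where k: "k \<in> K" "v k x0 \<noteq> 0" by blast
    \<comment> \<open>Gaussian elimination: clear coordinate x0 with the k-th vector and recurse on the rest.\<close>
    define w where "w i x = v i x - v i x0 / v k x0 * v k x" for i x
    have "finite (K - {k})" "card I < card (K - {k})"
      using insert k by auto
    then obtain \<nu> where \<nu>: "\<exists>i\<in>K - {k}. \<nu> i \<noteq> 0" "\<forall>x\<in>I. (\<Sum>i\<in>K - {k}. \<nu> i * w i x) = 0"
      using insert.IH[of "K - {k}" w] by blast
    define \<mu> where "\<mu> = \<nu>(k := - (\<Sum>i\<in>K - {k}. \<nu> i * v i x0) / v k x0)"
    have combination: "(\<Sum>i\<in>K. \<mu> i * v i x) = (\<Sum>i\<in>K - {k}. \<nu> i * w i x)" for x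
    proof -
      have "(\<Sum>i\<in>K. \<mu> i * v i x) = \<mu> k * v k x + (\<Sum>i\<in>K - {k}. \<nu> i * v i x)"
        using k insert.prems by (simp add: sum.remove \<mu>_def)
      moreover have "(\<Sum>i\<in>K - {k}. \<nu> i * w i x)
          = (\<Sum>i\<in>K - {k}. \<nu> i * v i x) - (\<Sum>i\<in>K - {k}. \<nu> i * v i x0) / v k x0 * v k x"
        by (simp add: w_def right_diff_distrib sum_subtractf sum_distrib_right
            sum_divide_distrib mult.assoc)
      ultimately show ?thesis
        by (simp add: \<mu>_def)
    qed
    show ?thesis
    proof (intro exI conjI ballI)
      show "\<exists>i\<in>K. \<mu> i \<noteq> 0"
        using \<nu>(1) by (auto simp: \<mu>_def)
    next
      fix x assume "x \<in> insert x0 I"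
      then show "(\<Sum>i\<in>K. \<mu> i * v i x) = 0"
        using \<nu>(2) k(2) by (auto simp: combination w_def)
    qed
  qed
qed

lemma sign_for_nonneg_weighted_sum:
  fixes \<mu> c :: "'i \<Rightarrow> real"
  assumes "finite K" "i0 \<in> K" "\<mu> i0 \<noteq> 0" "\<And>i. i \<in> K \<Longrightarrow> 0 \<le> c i"
  obtains \<sigma> :: real where "\<exists>i\<in>K. 0 < \<sigma> * \<mu> i" "0 \<le> (\<Sum>i\<in>K. \<sigma> * \<mu> i * c i)"
proof -
  consider "0 < (\<Sum>i\<in>K. \<mu> i * c i)" | "(\<Sum>i\<in>K. \<mu> i * c i) < 0" | "(\<Sum>i\<in>K. \<mu> i * c i) = 0"
    by linarith
  then show ?thesis
  proof cases
    case 1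
    then have "\<exists>i\<in>K. 0 < \<mu> i"
      using sum_nonpos[of K "\<lambda>i. \<mu> i * c i"] assms(4)
      by (metis mult_nonpos_nonneg not_less)
    with 1 show ?thesis
      by (intro that[of 1]) auto
  next
    case 2
    then have "\<exists>i\<in>K. \<mu> i < 0"
      using sum_nonneg[of K "\<lambda>i. \<mu> i * c i"] assms(4)
      by (metis mult_nonneg_nonneg not_less)
    with 2 show ?thesis
      by (intro that[of "-1"]) (auto simp: sum_negf)
  next
    case 3
    show ?thesis
    proof (cases "0 < \<mu> i0")
      case True
      with 3 assms(2) show ?thesis
        by (intro that[of 1]) auto
    next
      case False
      with 3 assms(2,3) show ?thesis
        by (intro that[of "-1"]) (auto simp: sum_negf intro!: bexI[of _ i0])
    qed
  qed
qed

lemma elimination_weights: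
  fixes \<nu> :: "'i \<Rightarrow> real"
  assumes fin: "finite K" and pos: "\<exists>i\<in>K. 0 < \<nu> i"
  obtains k where "k \<in> K" "0 < \<nu> k" "\<And>i. i \<in> K \<Longrightarrow> 0 \<le> 1 - \<nu> i / \<nu> k"
    "\<And>w. (\<Sum>i\<in>K - {k}. (1 - \<nu> i / \<nu> k) * w i) = (\<Sum>i\<in>K. w i) - (\<Sum>i\<in>K. \<nu> i * w i) / \<nu> k"
proof -
  obtain k where k: "k \<in> K" "\<nu> k = Max (\<nu> ` K)"
    using fin pos Max_in[of "\<nu> ` K"] by fastforce
  have le: "\<nu> i \<le> \<nu> k" if "i \<in> K" for i
    using fin that by (simp add: k(2))
  with pos have k_pos: "0 < \<nu> k"
    by force
  have nonneg: "0 \<le> 1 - \<nu> i / \<nu> k" if "i \<in> K" for i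
    using le[OF that] k_pos by simp
  have shift: "(\<Sum>i\<in>K - {k}. (1 - \<nu> i / \<nu> k) * w i)
      = (\<Sum>i\<in>K. w i) - (\<Sum>i\<in>K. \<nu> i * w i) / \<nu> k" for w
  proof -
    have "(\<Sum>i\<in>K - {k}. (1 - \<nu> i / \<nu> k) * w i) = (\<Sum>i\<in>K. (1 - \<nu> i / \<nu> k) * w i)"
      using fin k(1) k_pos by (simp add: sum.remove[of K k])
    then show ?thesis
      by (simp add: left_diff_distrib sum_subtractf sum_divide_distrib)
  qed
  show ?thesis
    by (rule that[OF k(1) k_pos nonneg shift])
qed

definition entry_box :: "real \<Rightarrow> ('i \<Rightarrow> nat \<Rightarrow> real) set"
  where "entry_box B = {a. \<forall>i p. \<bar>a i p\<bar> \<le> B}"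

lemma compact_PiE_UNIV:
  fixes S :: "'a \<Rightarrow> 'b::topological_space set"
  shows "(\<And>i. compact (S i)) \<Longrightarrow> compact (PiE UNIV S)"
  using compactin_PiE[of "\<lambda>_. euclidean" UNIV S]
  by (simp add: euclidean_product_topology compactin_euclidean_iff)

lemma compact_entry_box: "compact (entry_box B)"
proof -
  have "x \<in> {-B..B} \<longleftrightarrow> \<bar>x\<bar> \<le> B" for x :: real
    by auto
  then have box: "entry_box B = PiE UNIV (\<lambda>i. PiE UNIV (\<lambda>p. {-B..B}))"
    unfolding entry_box_def set_eq_iff by (simp add: PiE_iff del: atLeastAtMost_iff)
  show ?thesis
    unfolding box by (intro compact_PiE_UNIV compact_Icc)
qed

lemma mem_entry_box_if_vnorm2_le:
  assumes "\<And>i. vnorm2 n (a i) \<le> B" "\<And>i p. n \<le> p \<Longrightarrow> a i p = 0" "0 \<le> B"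
  shows "a \<in> entry_box B"
  unfolding entry_box_def mem_Collect_eq
proof (intro allI)
  fix i p
  show "\<bar>a i p\<bar> \<le> B"
  proof (cases "p < n")
    case True
    then show ?thesis
      using abs_le_vnorm2[OF True, of "a i"] assms(1)[of i] by linarith
  qed (use assms(2,3) in simp)
qed

lemma continuous_on_apply2:
  fixes f :: "'a::topological_space \<Rightarrow> 'b \<Rightarrow> 'c \<Rightarrow> 'd::topological_space"
  assumes "continuous_on S f"
  shows "continuous_on S (\<lambda>x. f x i p)"
  by (rule continuous_on_product_then_coordinatewise[OF
        continuous_on_product_then_coordinatewise[OF assms]])

context
  fixes n1 n2 n3 n4 :: nat
begin

definition cp_decomp ::
  "(nat \<Rightarrow> nat \<Rightarrow> nat \<Rightarrow> nat \<Rightarrow> real) \<Rightarrow> 'i set \<Rightarrow>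
   ('i \<Rightarrow> nat \<Rightarrow> real) \<Rightarrow> ('i \<Rightarrow> nat \<Rightarrow> real) \<Rightarrow> ('i \<Rightarrow> nat \<Rightarrow> real) \<Rightarrow> ('i \<Rightarrow> nat \<Rightarrow> real) \<Rightarrow> bool"
  where "cp_decomp X K a1 a2 a3 a4 \<longleftrightarrow>
    (\<forall>p<n1. \<forall>q<n2. \<forall>s<n3. \<forall>t<n4. X p q s t = (\<Sum>i\<in>K. a1 i p * a2 i q * a3 i s * a4 i t))"

definition term_norm ::
  "('i \<Rightarrow> nat \<Rightarrow> real) \<Rightarrow> ('i \<Rightarrow> nat \<Rightarrow> real) \<Rightarrow> ('i \<Rightarrow> nat \<Rightarrow> real) \<Rightarrow> ('i \<Rightarrow> nat \<Rightarrow> real) \<Rightarrow> 'i \<Rightarrow> real"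
  where "term_norm a1 a2 a3 a4 i =
    vnorm2 n1 (a1 i) * vnorm2 n2 (a2 i) * vnorm2 n3 (a3 i) * vnorm2 n4 (a4 i)"

definition cp_cost ::
  "'i set \<Rightarrow> ('i \<Rightarrow> nat \<Rightarrow> real) \<Rightarrow> ('i \<Rightarrow> nat \<Rightarrow> real) \<Rightarrow> ('i \<Rightarrow> nat \<Rightarrow> real) \<Rightarrow> ('i \<Rightarrow> nat \<Rightarrow> real) \<Rightarrow> real"
  where "cp_cost K a1 a2 a3 a4 = (\<Sum>i\<in>K. term_norm a1 a2 a3 a4 i)"

lemma term_norm_nonneg: "0 \<le> term_norm a1 a2 a3 a4 i"
  by (simp add: term_norm_def vnorm2_nonneg)

lemma cp_cost_nonneg: "0 \<le> cp_cost K a1 a2 a3 a4"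
  by (simp add: cp_cost_def sum_nonneg term_norm_nonneg)

lemma term_norm_pos_iff:
  "0 < term_norm a1 a2 a3 a4 i \<longleftrightarrow>
     0 < vnorm2 n1 (a1 i) \<and> 0 < vnorm2 n2 (a2 i) \<and> 0 < vnorm2 n3 (a3 i) \<and> 0 < vnorm2 n4 (a4 i)"
  using vnorm2_nonneg[of n1 "a1 i"] vnorm2_nonneg[of n2 "a2 i"]
    vnorm2_nonneg[of n3 "a3 i"] vnorm2_nonneg[of n4 "a4 i"]
  by (auto simp: term_norm_def less_le)

lemma rank_one_term_eq_0:
  assumes "term_norm a1 a2 a3 a4 i = 0" "p < n1" "q < n2" "s < n3" "t < n4"
  shows "a1 i p * a2 i q * a3 i s * a4 i t = 0"
  using assms by (auto simp: term_norm_def vnorm2_eq_0_iff)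

lemma cp_decomp_drop_term:
  assumes fin: "finite K" and card: "n1 * n2 * n3 * n4 < card K"
    and dec: "cp_decomp X K a1 a2 a3 a4"
  obtains k b1 where "k \<in> K" "cp_decomp X (K - {k}) b1 a2 a3 a4"
    "cp_cost (K - {k}) b1 a2 a3 a4 \<le> cp_cost K a1 a2 a3 a4"
proof -
  define I where "I = {..<n1} \<times> {..<n2} \<times> {..<n3} \<times> {..<n4}"
  define v where "v i = (\<lambda>(p, q, s, t). a1 i p * a2 i q * a3 i s * a4 i t)" for i
  define c where "c = term_norm a1 a2 a3 a4"
  have "card I < card K"
    using card by (simp add: I_def card_cartesian_product)
  then obtain \<mu> i0 where \<mu>: "i0 \<in> K" "\<mu> i0 \<noteq> 0" "\<forall>x\<in>I. (\<Sum>i\<in>K. \<mu> i * v i x) = 0"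
    using nontrivial_relation_if_card_less[of I K v] fin by (auto simp: I_def)
  obtain \<sigma> :: real where \<sigma>: "\<exists>i\<in>K. 0 < \<sigma> * \<mu> i" "0 \<le> (\<Sum>i\<in>K. \<sigma> * \<mu> i * c i)"
    using sign_for_nonneg_weighted_sum[of K i0 \<mu> c, OF fin \<mu>(1,2)] by (auto simp: c_def term_norm_nonneg)
  define \<nu> where "\<nu> i = \<sigma> * \<mu> i" for i
  have \<nu>_rel: "(\<Sum>i\<in>K. \<nu> i * v i x) = 0" if "x \<in> I" for x
    using \<mu>(3) that by (simp add: \<nu>_def mult.assoc sum_distrib_left[symmetric])
  \<comment> \<open>Shrinking all weights along the relation until the largest one reaches zero keeps
    the weights nonnegative and, by the choice of sign, does not increase the cost.\<close>
  have "\<exists>i\<in>K. 0 < \<nu> i"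
    using \<sigma>(1) by (simp add: \<nu>_def)
  then obtain k where k: "k \<in> K" "0 < \<nu> k" "\<And>i. i \<in> K \<Longrightarrow> 0 \<le> 1 - \<nu> i / \<nu> k"
    "\<And>w. (\<Sum>i\<in>K - {k}. (1 - \<nu> i / \<nu> k) * w i) = (\<Sum>i\<in>K. w i) - (\<Sum>i\<in>K. \<nu> i * w i) / \<nu> k"
    by (rule elimination_weights[OF fin]) (rule that)
  define f where "f i = 1 - \<nu> i / \<nu> k" for i
  note f_nonneg = k(3)[folded f_def] and shift = k(4)[folded f_def]
  define b1 where "b1 i = (\<lambda>p. f i * a1 i p)" for i
  have "cp_decomp X (K - {k}) b1 a2 a3 a4"
    unfolding cp_decomp_def
  proof (intro allI impI)
    fix p q s t assume pqst: "p < n1" "q < n2" "s < n3" "t < n4"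
    then have "(p, q, s, t) \<in> I"
      by (simp add: I_def)
    then have "(\<Sum>i\<in>K - {k}. f i * v i (p, q, s, t)) = X p q s t"
      using dec pqst by (simp add: shift \<nu>_rel) (simp add: cp_decomp_def v_def)
    then show "X p q s t = (\<Sum>i\<in>K - {k}. b1 i p * a2 i q * a3 i s * a4 i t)"
      by (simp add: b1_def v_def mult.assoc)
  qed
  moreover have "cp_cost (K - {k}) b1 a2 a3 a4 \<le> cp_cost K a1 a2 a3 a4"
  proof -
    have "term_norm b1 a2 a3 a4 i = f i * c i" if "i \<in> K" for i
      using f_nonneg[OF that] by (simp add: term_norm_def c_def b1_def vnorm2_cmult)
    then have "cp_cost (K - {k}) b1 a2 a3 a4 = (\<Sum>i\<in>K - {k}. f i * c i)"
      by (simp add: cp_cost_def)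
    also have "\<dots> = cp_cost K a1 a2 a3 a4 - (\<Sum>i\<in>K. \<nu> i * c i) / \<nu> k"
      by (simp add: shift cp_cost_def c_def)
    also have "\<dots> \<le> cp_cost K a1 a2 a3 a4"
      using \<sigma>(2) k(2) by (simp add: \<nu>_def)
    finally show ?thesis .
  qed
  ultimately show ?thesis
    by (rule that[OF k(1)])
qed

lemma cp_decomp_reduce:
  assumes "finite K" "cp_decomp X K a1 a2 a3 a4"
  obtains K' b1 where "finite K'" "card K' \<le> n1 * n2 * n3 * n4" "cp_decomp X K' b1 a2 a3 a4"
    "cp_cost K' b1 a2 a3 a4 \<le> cp_cost K a1 a2 a3 a4"
proof -
  have "\<exists>K' b1. finite K' \<and> card K' \<le> n1 * n2 * n3 * n4 \<and> cp_decomp X K' b1 a2 a3 a4 \<and>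
      cp_cost K' b1 a2 a3 a4 \<le> cp_cost K a1 a2 a3 a4"
    using assms
  proof (induction "card K" arbitrary: K a1 rule: less_induct)
    case less
    show ?case
    proof (cases "card K \<le> n1 * n2 * n3 * n4")
      case True
      with less.prems show ?thesis
        by blast
    next
      case False
      then obtain k b1 where k: "k \<in> K" "cp_decomp X (K - {k}) b1 a2 a3 a4"
        "cp_cost (K - {k}) b1 a2 a3 a4 \<le> cp_cost K a1 a2 a3 a4"
        using cp_decomp_drop_term[OF less.prems(1) _ less.prems(2)] by (metis not_le)
      have "card (K - {k}) < card K"
        using less.prems(1) k(1) by (rule card_Diff1_less)
      then obtain K' b1' where "finite K'" "card K' \<le> n1 * n2 * n3 * n4"
        "cp_decomp X K' b1' a2 a3 a4" "cp_cost K' b1' a2 a3 a4 \<le> cp_cost (K - {k}) b1 a2 a3 a4"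
        using less.hyps[of "K - {k}" b1] less.prems(1) k(2) by blast
      with k(3) show ?thesis
        by (blast intro: order_trans)
    qed
  qed
  with that show ?thesis
    by blast
qed

lemma cp_decomp_reindex_pad:
  fixes a1 a2 a3 a4 :: "'i \<Rightarrow> nat \<Rightarrow> real"
  assumes fin: "finite K" and card: "card K \<le> M" and dec: "cp_decomp X K a1 a2 a3 a4"
  obtains b1 b2 b3 b4 :: "nat \<Rightarrow> nat \<Rightarrow> real"
  where "cp_decomp X {..<M} b1 b2 b3 b4" "cp_cost {..<M} b1 b2 b3 b4 = cp_cost K a1 a2 a3 a4"
proof -
  obtain h where h: "bij_betw h {..<card K} K"
    using ex_bij_betw_nat_finite[OF fin] by (auto simp: atLeast0LessThan)
  have sum_pad: "(\<Sum>i<M. if i < card K then g (h i) else 0) = (\<Sum>x\<in>K. g x)" for g :: "'i \<Rightarrow> real"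
  proof -
    have "(\<Sum>i<M. if i < card K then g (h i) else 0) = (\<Sum>i<card K. g (h i))"
      using card by (intro sum.mono_neutral_cong_right) auto
    also have "\<dots> = (\<Sum>x\<in>K. g x)"
      using h by (rule sum.reindex_bij_betw)
    finally show ?thesis .
  qed
  define pad :: "('i \<Rightarrow> nat \<Rightarrow> real) \<Rightarrow> nat \<Rightarrow> nat \<Rightarrow> real"
    where "pad a i = (if i < card K then a (h i) else (\<lambda>_. 0))" for a i
  have "cp_decomp X {..<M} (pad a1) (pad a2) (pad a3) (pad a4)"
    unfolding cp_decomp_def
  proof (intro allI impI)
    fix p q s t assume "p < n1" "q < n2" "s < n3" "t < n4"
    then have "X p q s t = (\<Sum>x\<in>K. a1 x p * a2 x q * a3 x s * a4 x t)"
      using dec by (simp add: cp_decomp_def)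
    also have "\<dots> = (\<Sum>i<M. pad a1 i p * pad a2 i q * pad a3 i s * pad a4 i t)"
      unfolding sum_pad[symmetric] by (intro sum.cong) (simp_all add: pad_def)
    finally show "X p q s t = (\<Sum>i\<in>{..<M}. pad a1 i p * pad a2 i q * pad a3 i s * pad a4 i t)"
      by simp
  qed
  moreover have "cp_cost {..<M} (pad a1) (pad a2) (pad a3) (pad a4) = cp_cost K a1 a2 a3 a4"
    unfolding cp_cost_def sum_pad[symmetric]
    by (intro sum.cong) (auto simp: pad_def term_norm_def vnorm2_def)
  ultimately show ?thesis
    by (rule that)
qed

lemma cp_decomp_prescribe_norms:
  fixes y1 y2 y3 y4 :: "'i \<Rightarrow> real"
  assumes dec: "cp_decomp X K a1 a2 a3 a4"
    and nonneg: "\<And>i. 0 \<le> y1 i" "\<And>i. 0 \<le> y2 i" "\<And>i. 0 \<le> y3 i" "\<And>i. 0 \<le> y4 i"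
    and prod: "\<And>i. i \<in> K \<Longrightarrow> y1 i * y2 i * y3 i * y4 i = term_norm a1 a2 a3 a4 i"
  defines "G i \<equiv> i \<in> K \<and> 0 < term_norm a1 a2 a3 a4 i"
  obtains b1 b2 b3 b4 where "cp_decomp X K b1 b2 b3 b4"
    "cp_cost K b1 b2 b3 b4 = cp_cost K a1 a2 a3 a4"
    "\<And>i. vnorm2 n1 (b1 i) = (if G i then y1 i else 0)" "\<And>i. vnorm2 n2 (b2 i) = (if G i then y2 i else 0)"
    "\<And>i. vnorm2 n3 (b3 i) = (if G i then y3 i else 0)" "\<And>i. vnorm2 n4 (b4 i) = (if G i then y4 i else 0)"
    "\<And>i p. n1 \<le> p \<Longrightarrow> b1 i p = 0" "\<And>i p. n2 \<le> p \<Longrightarrow> b2 i p = 0"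
    "\<And>i p. n3 \<le> p \<Longrightarrow> b3 i p = 0" "\<And>i p. n4 \<le> p \<Longrightarrow> b4 i p = 0"
proof -
  define scale :: "nat \<Rightarrow> ('i \<Rightarrow> real) \<Rightarrow> ('i \<Rightarrow> nat \<Rightarrow> real) \<Rightarrow> 'i \<Rightarrow> nat \<Rightarrow> real"
    where "scale n y a i p = (if G i \<and> p < n then y i / vnorm2 n (a i) * a i p else 0)" for n y a i p
  have norm_scale: "vnorm2 n (scale n y a i) = (if G i then y i else 0)"
    if "0 \<le> y i" "G i \<Longrightarrow> 0 < vnorm2 n (a i)" for n y a i
  proof (cases "G i")
    case True
    then have "vnorm2 n (scale n y a i) = vnorm2 n (\<lambda>p. y i / vnorm2 n (a i) * a i p)"
      by (intro vnorm2_cong) (simp add: scale_def)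
    with True that show ?thesis
      by (simp only: vnorm2_cmult) simp
  qed (simp add: scale_def vnorm2_def)
  have pos: "0 < vnorm2 n1 (a1 i)" "0 < vnorm2 n2 (a2 i)" "0 < vnorm2 n3 (a3 i)" "0 < vnorm2 n4 (a4 i)"
    if "G i" for i
    using that by (simp_all add: G_def term_norm_pos_iff)
  define b1 b2 b3 b4 where "b1 = scale n1 y1 a1" "b2 = scale n2 y2 a2" "b3 = scale n3 y3 a3"
    "b4 = scale n4 y4 a4"
  have norms: "vnorm2 n1 (b1 i) = (if G i then y1 i else 0)" "vnorm2 n2 (b2 i) = (if G i then y2 i else 0)"
    "vnorm2 n3 (b3 i) = (if G i then y3 i else 0)" "vnorm2 n4 (b4 i) = (if G i then y4 i else 0)" for i
    unfolding b1_b2_b3_b4_def using pos nonneg by (simp_all add: norm_scale)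
  have terms: "b1 i p * b2 i q * b3 i s * b4 i t = a1 i p * a2 i q * a3 i s * a4 i t"
    if "i \<in> K" "p < n1" "q < n2" "s < n3" "t < n4" for i p q s t
  proof (cases "G i")
    case True
    then have "b1 i p * b2 i q * b3 i s * b4 i t
        = (y1 i * y2 i * y3 i * y4 i) / term_norm a1 a2 a3 a4 i * (a1 i p * a2 i q * a3 i s * a4 i t)"
      using that by (simp add: b1_b2_b3_b4_def scale_def term_norm_def)
    with True that prod show ?thesis
      by (simp add: G_def)
  next
    case False
    with that have "term_norm a1 a2 a3 a4 i = 0"
      using term_norm_nonneg[of a1 a2 a3 a4 i] by (simp add: G_def)
    with False that show ?thesis
      by (simp add: b1_b2_b3_b4_def scale_def rank_one_term_eq_0)
  qed
  have "cp_decomp X K b1 b2 b3 b4"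
    using dec by (simp add: cp_decomp_def terms)
  moreover have "cp_cost K b1 b2 b3 b4 = cp_cost K a1 a2 a3 a4"
    unfolding cp_cost_def
  proof (intro sum.cong refl)
    fix i assume "i \<in> K"
    then show "term_norm b1 b2 b3 b4 i = term_norm a1 a2 a3 a4 i"
      using prod[of i] term_norm_nonneg[of a1 a2 a3 a4 i]
      by (auto simp: term_norm_def[of b1] norms G_def)
  qed
  ultimately show ?thesis
    using norms by (rule that) (simp_all add: b1_b2_b3_b4_def scale_def)
qed

definition cp_costs :: "(nat \<Rightarrow> nat \<Rightarrow> nat \<Rightarrow> nat \<Rightarrow> real) \<Rightarrow> real set"
  where "cp_costs X =
    {cp_cost {..<r} a1 a2 a3 a4 | (r :: nat) a1 a2 a3 a4. cp_decomp X {..<r} a1 a2 a3 a4}"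

lemma nuclear_norm4_eq_Inf_cp_costs: "nuclear_norm4 n1 n2 n3 n4 X = Inf (cp_costs X)"
  unfolding nuclear_norm4_def cp_costs_def cp_cost_def term_norm_def cp_decomp_def
  by (rule arg_cong[of _ _ Inf]) blast

lemma nuclear_norm4_le_cp_cost:
  assumes "cp_decomp X {..<r :: nat} a1 a2 a3 a4"
  shows "nuclear_norm4 n1 n2 n3 n4 X \<le> cp_cost {..<r} a1 a2 a3 a4"
  unfolding nuclear_norm4_eq_Inf_cp_costs
proof (rule cInf_lower)
  show "cp_cost {..<r} a1 a2 a3 a4 \<in> cp_costs X"
    unfolding cp_costs_def using assms by blast
  show "bdd_below (cp_costs X)"
    by (rule bdd_belowI[of _ 0]) (auto simp: cp_costs_def cp_cost_nonneg)
qed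

lemma cp_decomp_entrywise:
  "cp_decomp X ({..<n1} \<times> {..<n2} \<times> {..<n3} \<times> {..<n4})
     (\<lambda>(p, q, s, t) p'. if p' = p then X p q s t else 0)
     (\<lambda>(p, q, s, t) q'. if q' = q then 1 else 0)
     (\<lambda>(p, q, s, t) s'. if s' = s then 1 else 0)
     (\<lambda>(p, q, s, t) t'. if t' = t then 1 else 0)"
  unfolding cp_decomp_def
proof (intro allI impI)
  fix p q s t assume "p < n1" "q < n2" "s < n3" "t < n4"
  then show "X p q s t = (\<Sum>x\<in>{..<n1} \<times> {..<n2} \<times> {..<n3} \<times> {..<n4}.
      (case x of (p, q, s, t) \<Rightarrow> \<lambda>p'. if p' = p then X p q s t else 0) p *
      (case x of (p, q, s, t) \<Rightarrow> \<lambda>q'. if q' = q then 1 else 0) q *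
      (case x of (p, q, s, t) \<Rightarrow> \<lambda>s'. if s' = s then 1 else 0) s *
      (case x of (p, q, s, t) \<Rightarrow> \<lambda>t'. if t' = t then 1 else 0) t)"
    by (subst sum.remove[of _ "(p, q, s, t)"]) (auto intro!: sum.neutral split: prod.splits if_splits)
qed

lemma cp_costs_nonempty: "cp_costs X \<noteq> {}"
proof -
  let ?I = "{..<n1} \<times> {..<n2} \<times> {..<n3} \<times> {..<n4}"
  obtain b1 b2 b3 b4 :: "nat \<Rightarrow> nat \<Rightarrow> real" where "cp_decomp X {..<card ?I} b1 b2 b3 b4"
    using cp_decomp_reindex_pad[OF _ order.refl cp_decomp_entrywise] by blast
  then show ?thesis
    unfolding cp_costs_def by blast
qed

lemma cp_costs_bounded_witness:
  assumes "s \<in> cp_costs X"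
  obtains a1 a2 a3 a4 where "cp_decomp X {..<n1 * n2 * n3 * n4} a1 a2 a3 a4"
    "cp_cost {..<n1 * n2 * n3 * n4} a1 a2 a3 a4 \<le> s"
    "a1 \<in> entry_box (root 4 s)" "a2 \<in> entry_box (root 4 s)"
    "a3 \<in> entry_box (root 4 s)" "a4 \<in> entry_box (root 4 s)"
proof -
  let ?M = "n1 * n2 * n3 * n4"
  obtain r and a1 a2 a3 a4 :: "nat \<Rightarrow> nat \<Rightarrow> real"
    where a: "cp_decomp X {..<r} a1 a2 a3 a4" "cp_cost {..<r} a1 a2 a3 a4 = s"
    using assms by (auto simp: cp_costs_def)
  obtain K b1 where b: "finite K" "card K \<le> ?M" "cp_decomp X K b1 a2 a3 a4"
    "cp_cost K b1 a2 a3 a4 \<le> s"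
    using cp_decomp_reduce[OF _ a(1)] a(2) by blast
  obtain c1 c2 c3 c4 where c: "cp_decomp X {..<?M} c1 c2 c3 c4"
    "cp_cost {..<?M} c1 c2 c3 c4 \<le> s"
    using cp_decomp_reindex_pad[OF b(1-3)] b(4) by metis
  let ?w = "term_norm c1 c2 c3 c4"
  have w_le: "?w i \<le> s" if "i < ?M" for i
    using c(2) that member_le_sum[of i "{..<?M}" ?w]
    by (simp add: cp_cost_def term_norm_nonneg)
  have root_w: "root 4 (?w i) * root 4 (?w i) * root 4 (?w i) * root 4 (?w i) = ?w i" for i
    using real_root_pow_pos2[of 4 "?w i"] by (simp add: term_norm_nonneg power4_eq_xxxx)
  \<comment> \<open>Giving all four factors of a term the same norm bounds every entry by the fourth root of the cost.\<close>
  obtain e1 e2 e3 e4 where e: "cp_decomp X {..<?M} e1 e2 e3 e4"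
    "cp_cost {..<?M} e1 e2 e3 e4 = cp_cost {..<?M} c1 c2 c3 c4"
    "\<And>i. vnorm2 n1 (e1 i) = (if i \<in> {..<?M} \<and> 0 < ?w i then root 4 (?w i) else 0)"
    "\<And>i. vnorm2 n2 (e2 i) = (if i \<in> {..<?M} \<and> 0 < ?w i then root 4 (?w i) else 0)"
    "\<And>i. vnorm2 n3 (e3 i) = (if i \<in> {..<?M} \<and> 0 < ?w i then root 4 (?w i) else 0)"
    "\<And>i. vnorm2 n4 (e4 i) = (if i \<in> {..<?M} \<and> 0 < ?w i then root 4 (?w i) else 0)"
    "\<And>i p. n1 \<le> p \<Longrightarrow> e1 i p = 0" "\<And>i p. n2 \<le> p \<Longrightarrow> e2 i p = 0"
    "\<And>i p. n3 \<le> p \<Longrightarrow> e3 i p = 0" "\<And>i p. n4 \<le> p \<Longrightarrow> e4 i p = 0"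
    using cp_decomp_prescribe_norms[OF c(1), of "\<lambda>i. root 4 (?w i)" "\<lambda>i. root 4 (?w i)"
        "\<lambda>i. root 4 (?w i)" "\<lambda>i. root 4 (?w i)"] root_w
    by (simp add: term_norm_nonneg) blast
  have s_nonneg: "0 \<le> s"
    using a(2) cp_cost_nonneg by blast
  have bounded: "e \<in> entry_box (root 4 s)"
    if "\<And>i. vnorm2 n (e i) = (if i \<in> {..<?M} \<and> 0 < ?w i then root 4 (?w i) else 0)"
      "\<And>i p. n \<le> p \<Longrightarrow> e i p = 0" for n e
  proof (rule mem_entry_box_if_vnorm2_le[of n])
    show "vnorm2 n (e i) \<le> root 4 s" for i
      unfolding that(1) using w_le[of i] s_nonneg by auto
  qed (simp_all add: that(2) s_nonneg)
  show ?thesis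
    using that[OF e(1)] e(2) c(2) bounded[OF e(3,7)] bounded[OF e(4,8)] bounded[OF e(5,9)]
      bounded[OF e(6,10)] by simp
qed

lemma closed_cp_decomp_tuples:
  "closed {(a1, a2, a3, a4). cp_decomp X {..<M :: nat} a1 a2 a3 a4}"
proof -
  have "{(a1, a2, a3, a4). cp_decomp X {..<M} a1 a2 a3 a4} =
    (\<Inter>p<n1. \<Inter>q<n2. \<Inter>s<n3. \<Inter>t<n4. {w. X p q s t =
      (\<Sum>i<M. fst w i p * fst (snd w) i q * fst (snd (snd w)) i s * snd (snd (snd w)) i t)})"
    by (auto simp: cp_decomp_def)
  also have "closed \<dots>"
    by (intro closed_INT ballI closed_Collect_eq continuous_intros continuous_on_apply2)
  finally show ?thesis .
qed

lemma continuous_on_cp_cost_tuples: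
  "continuous_on S (\<lambda>(a1, a2, a3, a4). cp_cost {..<M :: nat} a1 a2 a3 a4)"
  unfolding case_prod_beta cp_cost_def term_norm_def vnorm2_def
  by (intro continuous_intros continuous_on_apply2)

lemma nuclear_norm4_attained:
  obtains a1 a2 a3 a4 where "cp_decomp X {..<n1 * n2 * n3 * n4} a1 a2 a3 a4"
    "cp_cost {..<n1 * n2 * n3 * n4} a1 a2 a3 a4 = nuclear_norm4 n1 n2 n3 n4 X"
proof -
  let ?M = "n1 * n2 * n3 * n4"
  let ?S = "cp_costs X"
  obtain s0 where s0: "s0 \<in> ?S"
    using cp_costs_nonempty by blast
  define B where "B = root 4 s0"
  define F where "F = (entry_box B \<times> entry_box B \<times> entry_box B \<times> entry_box B) \<inter>
    {(a1, a2, a3, a4). cp_decomp X {..<?M} a1 a2 a3 a4}"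
  define g :: "(nat \<Rightarrow> nat \<Rightarrow> real) \<times> (nat \<Rightarrow> nat \<Rightarrow> real) \<times> (nat \<Rightarrow> nat \<Rightarrow> real) \<times> (nat \<Rightarrow> nat \<Rightarrow> real) \<Rightarrow> real"
    where "g = (\<lambda>(a1, a2, a3, a4). cp_cost {..<?M} a1 a2 a3 a4)"
  have "compact F"
    unfolding F_def
    by (intro compact_Int_closed compact_Times compact_entry_box closed_cp_decomp_tuples)
  moreover have "continuous_on F g"
    unfolding g_def by (rule continuous_on_cp_cost_tuples)
  moreover have below: "\<exists>w\<in>F. g w \<le> s" if s_in: "s \<in> ?S" and s_le: "s \<le> s0" for s
  proof -
    obtain a1 a2 a3 a4 where a: "cp_decomp X {..<?M} a1 a2 a3 a4" "cp_cost {..<?M} a1 a2 a3 a4 \<le> s"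
      "a1 \<in> entry_box (root 4 s)" "a2 \<in> entry_box (root 4 s)"
      "a3 \<in> entry_box (root 4 s)" "a4 \<in> entry_box (root 4 s)"
      using cp_costs_bounded_witness[OF s_in] by blast
    have "root 4 s \<le> B"
      using s_le by (simp add: B_def)
    then have "entry_box (root 4 s) \<subseteq> entry_box B"
      by (auto simp: entry_box_def intro: order_trans)
    with a show ?thesis
      by (intro bexI[of _ "(a1, a2, a3, a4)"]) (auto simp: F_def g_def)
  qed
  moreover have "F \<noteq> {}"
    using below[OF s0] by blast
  ultimately obtain w where w: "w \<in> F" "\<And>y. y \<in> F \<Longrightarrow> g w \<le> g y"
    using continuous_attains_inf by metis
  have "Inf ?S = g w"
  proof (rule cInf_eq_minimum)
    show "g w \<in> ?S"
      using w(1) unfolding F_def g_def cp_costs_def by (auto, blast)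
    fix s assume "s \<in> ?S"
    then have "min s s0 \<in> ?S" "min s s0 \<le> s0"
      using s0 by (auto simp: min_def)
    then show "g w \<le> s"
      using below w(2) by fastforce
  qed
  with w(1) that show ?thesis
    by (auto simp: F_def g_def nuclear_norm4_eq_Inf_cp_costs)
qed

end

definition column_imbalance :: "nat \<Rightarrow> nat \<Rightarrow> real \<Rightarrow> real \<Rightarrow> real \<Rightarrow> real \<Rightarrow> real"
  where "column_imbalance J L x1 x2 x3 x4 =
    (sqrt (real L) * x1 * x2 - sqrt (real J) * x3 * x4)\<^sup>2 +
    (sqrt (real J) * x1 * x4 - sqrt (real L) * x3 * x2)\<^sup>2"

lemma column_imbalance_nonneg: "0 \<le> column_imbalance J L x1 x2 x3 x4"
  by (simp add: column_imbalance_def)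

lemma column_imbalance_eq_0_iff:
  "column_imbalance J L x1 x2 x3 x4 = 0 \<longleftrightarrow>
     sqrt (real L) * x1 * x2 = sqrt (real J) * x3 * x4 \<and>
     sqrt (real J) * x1 * x4 = sqrt (real L) * x3 * x2"
  by (simp add: column_imbalance_def add_nonneg_eq_0_iff)

lemma weighted_squares_eq_product_plus_imbalance:
  "real L * (x1 * x2)\<^sup>2 + real J * (x3 * x4)\<^sup>2 + real J * (x1 * x4)\<^sup>2 + real L * (x3 * x2)\<^sup>2
     = 4 * sqrt (real J * real L) * (x1 * x2 * x3 * x4) + column_imbalance J L x1 x2 x3 x4"
proof -
  have "real J = sqrt (real J) * sqrt (real J)" "real L = sqrt (real L) * sqrt (real L)"
    by simp_all
  then show ?thesis
    unfolding column_imbalance_def real_sqrt_mult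
    by (simp add: power2_eq_square algebra_simps)
qed

lemma is_factorization_iff_cp_decomp:
  "is_factorization N1 J N3 L X D U V Rt Tt \<longleftrightarrow>
     cp_decomp N1 J N3 L X {..<D} (\<lambda>d i. U i d) (\<lambda>d j. Rt j d) (\<lambda>d k. V k d) (\<lambda>d l. Tt l d)"
  by (simp add: is_factorization_def cp_decomp_def mult_ac)

lemma sum_sq_mult_column:
  "(\<Sum>i<N. \<Sum>d<D. (U i d * c d)\<^sup>2) = (\<Sum>d<D. (vnorm2 N (\<lambda>i. U i d))\<^sup>2 * (c d)\<^sup>2)"
  by (subst sum.swap) (simp add: power2_vnorm2 power_mult_distrib sum_distrib_right)

lemma fact_objective_eq_cp_cost_plus_imbalance:
  assumes "0 < J" "0 < L"
  shows "fact_objective N1 J N3 L D U V Rt Tt =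
    cp_cost N1 J N3 L {..<D} (\<lambda>d i. U i d) (\<lambda>d j. Rt j d) (\<lambda>d k. V k d) (\<lambda>d l. Tt l d) +
    (\<Sum>d<D. column_imbalance J L (vnorm2 N1 (\<lambda>i. U i d)) (vnorm2 J (\<lambda>j. Rt j d))
        (vnorm2 N3 (\<lambda>k. V k d)) (vnorm2 L (\<lambda>l. Tt l d))) / (4 * sqrt (real J * real L))"
proof -
  define nU where "nU d = vnorm2 N1 (\<lambda>i. U i d)" for d
  define nR where "nR d = vnorm2 J (\<lambda>j. Rt j d)" for d
  define nV where "nV d = vnorm2 N3 (\<lambda>k. V k d)" for d
  define nT where "nT d = vnorm2 L (\<lambda>l. Tt l d)" for d
  define k where "k = 4 * sqrt (real J * real L)"
  have k_pos: "0 < k"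
    using assms by (simp add: k_def)
  have inner: "(\<Sum>i<N1. \<Sum>d<D. (U i d * Rt j d)\<^sup>2) + (\<Sum>k<N3. \<Sum>d<D. (V k d * Tt l d)\<^sup>2)
      + (\<Sum>i<N1. \<Sum>d<D. (U i d * Tt l d)\<^sup>2) + (\<Sum>k<N3. \<Sum>d<D. (V k d * Rt j d)\<^sup>2)
    = (\<Sum>d<D. (nU d)\<^sup>2 * (Rt j d)\<^sup>2 + (nV d)\<^sup>2 * (Tt l d)\<^sup>2
        + (nU d)\<^sup>2 * (Tt l d)\<^sup>2 + (nV d)\<^sup>2 * (Rt j d)\<^sup>2)" for j l
    by (simp add: sum_sq_mult_column nU_def nV_def sum.distrib)
  have "(\<Sum>l<L. \<Sum>j<J.
        (\<Sum>i<N1. \<Sum>d<D. (U i d * Rt j d)\<^sup>2) + (\<Sum>k<N3. \<Sum>d<D. (V k d * Tt l d)\<^sup>2)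
      + (\<Sum>i<N1. \<Sum>d<D. (U i d * Tt l d)\<^sup>2) + (\<Sum>k<N3. \<Sum>d<D. (V k d * Rt j d)\<^sup>2))
    = (\<Sum>d<D. \<Sum>l<L. \<Sum>j<J. (nU d)\<^sup>2 * (Rt j d)\<^sup>2 + (nV d)\<^sup>2 * (Tt l d)\<^sup>2
        + (nU d)\<^sup>2 * (Tt l d)\<^sup>2 + (nV d)\<^sup>2 * (Rt j d)\<^sup>2)"
    by (simp add: inner sum.swap[of _ "{..<J}" "{..<D}"] sum.swap[of _ "{..<L}" "{..<D}"])
  also have "\<dots> = (\<Sum>d<D. real L * (nU d * nR d)\<^sup>2 + real J * (nV d * nT d)\<^sup>2
      + real J * (nU d * nT d)\<^sup>2 + real L * (nV d * nR d)\<^sup>2)"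
    by (simp add: sum.distrib nR_def nT_def power2_vnorm2 power_mult_distrib
        sum_distrib_left[symmetric] sum_distrib_right[symmetric] algebra_simps)
  also have "\<dots> = (\<Sum>d<D. k * (nU d * nR d * nV d * nT d)
      + column_imbalance J L (nU d) (nR d) (nV d) (nT d))"
    unfolding k_def by (rule sum.cong[OF refl weighted_squares_eq_product_plus_imbalance])
  also have "\<dots> = k * (\<Sum>d<D. nU d * nR d * nV d * nT d)
      + (\<Sum>d<D. column_imbalance J L (nU d) (nR d) (nV d) (nT d))"
    by (simp add: sum.distrib sum_distrib_left)
  finally show ?thesis
    using k_pos unfolding fact_objective_def k_def[symmetric]
    by (simp add: cp_cost_def term_norm_def nU_def nR_def nV_def nT_def field_simps)
qed

lemma cp_cost_le_fact_objective:
  assumes "0 < J" "0 < L"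
  shows "cp_cost N1 J N3 L {..<D} (\<lambda>d i. U i d) (\<lambda>d j. Rt j d) (\<lambda>d k. V k d) (\<lambda>d l. Tt l d)
    \<le> fact_objective N1 J N3 L D U V Rt Tt"
  using assms unfolding fact_objective_eq_cp_cost_plus_imbalance[OF assms]
  by (simp add: sum_nonneg column_imbalance_nonneg)

lemma nuclear_norm4_le_fact_objective:
  assumes "0 < J" "0 < L" "is_factorization N1 J N3 L X D U V Rt Tt"
  shows "nuclear_norm4 N1 J N3 L X \<le> fact_objective N1 J N3 L D U V Rt Tt"
proof -
  have "nuclear_norm4 N1 J N3 L X
      \<le> cp_cost N1 J N3 L {..<D} (\<lambda>d i. U i d) (\<lambda>d j. Rt j d) (\<lambda>d k. V k d) (\<lambda>d l. Tt l d)"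
    using assms(3) by (intro nuclear_norm4_le_cp_cost) (simp add: is_factorization_iff_cp_decomp)
  also have "\<dots> \<le> fact_objective N1 J N3 L D U V Rt Tt"
    by (rule cp_cost_le_fact_objective[OF assms(1,2)])
  finally show ?thesis .
qed

lemma optimal_factorization_balanced:
  assumes JL: "0 < J" "0 < L" and fact: "is_factorization N1 J N3 L X D U V Rt Tt"
    and opt: "fact_objective N1 J N3 L D U V Rt Tt = nuclear_norm4 N1 J N3 L X" and "d < D"
  shows "column_imbalance J L (vnorm2 N1 (\<lambda>i. U i d)) (vnorm2 J (\<lambda>j. Rt j d))
      (vnorm2 N3 (\<lambda>k. V k d)) (vnorm2 L (\<lambda>l. Tt l d)) = 0"
proof -
  let ?imb = "\<lambda>d. column_imbalance J L (vnorm2 N1 (\<lambda>i. U i d)) (vnorm2 J (\<lambda>j. Rt j d))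
      (vnorm2 N3 (\<lambda>k. V k d)) (vnorm2 L (\<lambda>l. Tt l d))"
  have "nuclear_norm4 N1 J N3 L X
      \<le> cp_cost N1 J N3 L {..<D} (\<lambda>d i. U i d) (\<lambda>d j. Rt j d) (\<lambda>d k. V k d) (\<lambda>d l. Tt l d)"
    using fact by (intro nuclear_norm4_le_cp_cost) (simp add: is_factorization_iff_cp_decomp)
  with opt have "(\<Sum>d<D. ?imb d) / (4 * sqrt (real J * real L)) \<le> 0"
    unfolding fact_objective_eq_cp_cost_plus_imbalance[OF JL] by simp
  moreover have "0 < real J * real L" "0 \<le> (\<Sum>d<D. ?imb d)"
    using JL by (simp_all add: sum_nonneg column_imbalance_nonneg)
  ultimately have "(\<Sum>d<D. ?imb d) = 0"
    by (simp add: divide_le_0_iff)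
  with \<open>d < D\<close> show ?thesis
    by (simp add: sum_nonneg_eq_0_iff column_imbalance_nonneg)
qed

lemma cp_decomp_balanced_factorization:
  assumes JL: "0 < J" "0 < L" and dec: "cp_decomp N1 J N3 L X {..<D} a1 a2 a3 a4"
  obtains U V Rt Tt where "is_factorization N1 J N3 L X D U V Rt Tt"
    "fact_objective N1 J N3 L D U V Rt Tt = cp_cost N1 J N3 L {..<D} a1 a2 a3 a4"
proof -
  let ?c = "term_norm N1 J N3 L a1 a2 a3 a4"
  \<comment> \<open>Columns of norms \<rho>, sqrt J, \<rho>, sqrt L make every column imbalance vanish.\<close>
  define \<rho> where "\<rho> d = sqrt (?c d / sqrt (real J * real L))" for d
  have \<rho>: "\<rho> d * sqrt (real J) * \<rho> d * sqrt (real L) = ?c d" for d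
    using JL term_norm_nonneg[of N1 J N3 L a1 a2 a3 a4 d]
    by (simp add: \<rho>_def real_sqrt_mult mult_ac)
  have \<rho>_nonneg: "0 \<le> \<rho> d" for d
    by (simp add: \<rho>_def term_norm_nonneg)
  obtain b1 b2 b3 b4 where b: "cp_decomp N1 J N3 L X {..<D} b1 b2 b3 b4"
    "cp_cost N1 J N3 L {..<D} b1 b2 b3 b4 = cp_cost N1 J N3 L {..<D} a1 a2 a3 a4"
    "\<And>d. vnorm2 N1 (b1 d) = (if d \<in> {..<D} \<and> 0 < ?c d then \<rho> d else 0)"
    "\<And>d. vnorm2 J (b2 d) = (if d \<in> {..<D} \<and> 0 < ?c d then sqrt (real J) else 0)"
    "\<And>d. vnorm2 N3 (b3 d) = (if d \<in> {..<D} \<and> 0 < ?c d then \<rho> d else 0)"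
    "\<And>d. vnorm2 L (b4 d) = (if d \<in> {..<D} \<and> 0 < ?c d then sqrt (real L) else 0)"
    by (rule cp_decomp_prescribe_norms[OF dec, of \<rho> "\<lambda>_. sqrt (real J)" \<rho> "\<lambda>_. sqrt (real L)"])
      (simp_all add: \<rho> \<rho>_nonneg that)
  define U V Rt Tt where "U i d = b1 d i" "V k d = b3 d k" "Rt j d = b2 d j" "Tt l d = b4 d l"
    for i j k l d
  have "is_factorization N1 J N3 L X D U V Rt Tt"
    using b(1) by (simp add: is_factorization_iff_cp_decomp U_V_Rt_Tt_def)
  moreover have "column_imbalance J L (vnorm2 N1 (b1 d)) (vnorm2 J (b2 d)) (vnorm2 N3 (b3 d))
      (vnorm2 L (b4 d)) = 0" for d
    by (simp add: b(3-6) column_imbalance_def mult_ac)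
  then have "fact_objective N1 J N3 L D U V Rt Tt = cp_cost N1 J N3 L {..<D} a1 a2 a3 a4"
    unfolding fact_objective_eq_cp_cost_plus_imbalance[OF JL] using b(2)
    by (simp add: U_V_Rt_Tt_def)
  ultimately show ?thesis
    by (rule that)
qed

theorem theorem3:
  fixes N1 J N3 L :: nat and X :: "nat \<Rightarrow> nat \<Rightarrow> nat \<Rightarrow> nat \<Rightarrow> real"
  assumes "N1 \<ge> 1" "J \<ge> 1" "N3 \<ge> 1" "L \<ge> 1"
  shows "(\<exists>D U V Rt Tt. is_factorization N1 J N3 L X D U V Rt Tt \<and>
            fact_objective N1 J N3 L D U V Rt Tt = nuclear_norm4 N1 J N3 L X)
       \<and> (\<forall>D U V Rt Tt. is_factorization N1 J N3 L X D U V Rt Tt \<longrightarrow>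
            nuclear_norm4 N1 J N3 L X \<le> fact_objective N1 J N3 L D U V Rt Tt)
       \<and> (\<forall>D U V Rt Tt. is_factorization N1 J N3 L X D U V Rt Tt \<and>
            fact_objective N1 J N3 L D U V Rt Tt = nuclear_norm4 N1 J N3 L X \<longrightarrow>
            (\<forall>d<D.
              sqrt (real L) * vnorm2 N1 (\<lambda>i. U i d) * vnorm2 J (\<lambda>j. Rt j d)
                = sqrt (real J) * vnorm2 N3 (\<lambda>k. V k d) * vnorm2 L (\<lambda>l. Tt l d)
            \<and> sqrt (real J) * vnorm2 N1 (\<lambda>i. U i d) * vnorm2 L (\<lambda>l. Tt l d)
                = sqrt (real L) * vnorm2 N3 (\<lambda>k. V k d) * vnorm2 J (\<lambda>j. Rt j d)))"
proof -
  have JL: "0 < J" "0 < L"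
    using assms by auto
  obtain a1 a2 a3 a4 where opt: "cp_decomp N1 J N3 L X {..<N1 * J * N3 * L} a1 a2 a3 a4"
    "cp_cost N1 J N3 L {..<N1 * J * N3 * L} a1 a2 a3 a4 = nuclear_norm4 N1 J N3 L X"
    by (rule nuclear_norm4_attained)
  obtain U V Rt Tt where "is_factorization N1 J N3 L X (N1 * J * N3 * L) U V Rt Tt"
    "fact_objective N1 J N3 L (N1 * J * N3 * L) U V Rt Tt = nuclear_norm4 N1 J N3 L X"
    using cp_decomp_balanced_factorization[OF JL opt(1)] opt(2) by metis
  moreover have "nuclear_norm4 N1 J N3 L X \<le> fact_objective N1 J N3 L D U V Rt Tt"
    if "is_factorization N1 J N3 L X D U V Rt Tt" for D U V Rt Tt
    using nuclear_norm4_le_fact_objective[OF JL that] .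
  moreover have "column_imbalance J L (vnorm2 N1 (\<lambda>i. U i d)) (vnorm2 J (\<lambda>j. Rt j d))
      (vnorm2 N3 (\<lambda>k. V k d)) (vnorm2 L (\<lambda>l. Tt l d)) = 0"
    if "is_factorization N1 J N3 L X D U V Rt Tt"
      "fact_objective N1 J N3 L D U V Rt Tt = nuclear_norm4 N1 J N3 L X" "d < D" for D U V Rt Tt d
    using optimal_factorization_balanced[OF JL that] .
  ultimately show ?thesis
    unfolding column_imbalance_eq_0_iff by blast
qed

end
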